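(* A semiring $R$ is $k$-simple if and only if it is $k$-congruence-simple.
   Context: A semiring $(R,+,\cdot)$ is a set with two binary operations such that $(R,+)$ is a commutative semigroup, $(R,\cdot)$ is a semigroup, and multiplication distributes over addition from both sides; no additive neutral element or identity is assumed. An element $0\in R$ is a zero of $R$ if $0+r=r$ and $0r=r0=0$ for all $r\in R$. An ideal of $R$ is a nonempty subset $A\subseteq R$ with $a+b\in A$ and $ra,ar\in A$ for all $a,b\in A$, $r\in R$; the trivial ideals are $R$ and, if $R$ has a zero $0$, $\{0\}$. For an ideal $A$, its $k$-closure is $\overline{A}=\{x\in R\mid x+a=b \text{ for some } a,b\in A\}$, and $A$ is a $k$-ideal if $A=\overline{A}$. $R$ is $k$-simple if it has no $k$-ideals other than the trivial ideals. A congruence on $R$ is an equivalence relation $\equiv$ such that $a\equiv b$ implies $a+c\equiv b+c$, $ac\equiv bc$, $ca\equiv cb$ for all $a,b,c\in R$. For an ideal $A$, $\kappa_A$ is the congruence defined by $x\,\kappa_A\,y$ iff $x+a=y+b$ for some $a,b\in A$. A congruence $\theta$ is a $k$-congruence if $\theta=\kappa_A$ for some ideal $A$ of $R$. $R$ is $k$-congruence-simple if it has no $k$-congruences other than $R\times R$ and the identity relation $\mathrm{id}_R$. Throughout, $|R|\geq 2$. *)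

theory Defs
  imports Main
begin

text \<open>A semiring in the sense of the paper (no additive neutral element, no identity)
is exactly the Isabelle type class semiring: ab_semigroup_add + semigroup_mult
with two-sided distributivity. The semiring R is the whole type.\<close>

definition is_zero :: "'a::semiring \<Rightarrow> bool" where
  "is_zero z \<longleftrightarrow> (\<forall>r. z + r = r \<and> z * r = z \<and> r * z = z)"

definition is_ideal :: "'a::semiring set \<Rightarrow> bool" where
  "is_ideal A \<longleftrightarrow> A \<noteq> {} \<and> (\<forall>a\<in>A. \<forall>b\<in>A. a + b \<in> A)
     \<and> (\<forall>a\<in>A. \<forall>r. r * a \<in> A \<and> a * r \<in> A)"

definition trivial_ideal :: "'a::semiring set \<Rightarrow> bool" where
  "trivial_ideal A \<longleftrightarrow> A = UNIV \<or> (\<exists>z. is_zero z \<and> A = {z})"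

definition k_closure :: "'a::semiring set \<Rightarrow> 'a set" where
  "k_closure A = {x. \<exists>a\<in>A. \<exists>b\<in>A. x + a = b}"

definition is_k_ideal :: "'a::semiring set \<Rightarrow> bool" where
  "is_k_ideal A \<longleftrightarrow> is_ideal A \<and> A = k_closure A"

definition k_simple :: "'a::semiring itself \<Rightarrow> bool" where
  "k_simple _ \<longleftrightarrow> (\<forall>A::'a set. is_k_ideal A \<longrightarrow> trivial_ideal A)"

definition is_congruence :: "('a::semiring \<times> 'a) set \<Rightarrow> bool" where
  "is_congruence \<theta> \<longleftrightarrow> equiv UNIV \<theta> \<and>
     (\<forall>a b c. (a, b) \<in> \<theta> \<longrightarrow> (a + c, b + c) \<in> \<theta> \<and> (a * c, b * c) \<in> \<theta> \<and> (c * a, c * b) \<in> \<theta>)"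

definition kappa :: "'a::semiring set \<Rightarrow> ('a \<times> 'a) set" where
  "kappa A = {(x, y). \<exists>a\<in>A. \<exists>b\<in>A. x + a = y + b}"

definition is_k_congruence :: "('a::semiring \<times> 'a) set \<Rightarrow> bool" where
  "is_k_congruence \<theta> \<longleftrightarrow> is_congruence \<theta> \<and> (\<exists>A. is_ideal A \<and> \<theta> = kappa A)"

definition k_congruence_simple :: "'a::semiring itself \<Rightarrow> bool" where
  "k_congruence_simple _ \<longleftrightarrow>
     (\<forall>\<theta>::('a \<times> 'a) set. is_k_congruence \<theta> \<longrightarrow> \<theta> = UNIV \<or> \<theta> = Id)"

end

theory Submission
  imports Defs
begin

text \<open>For an ideal \<open>A\<close>, the congruence \<open>\<kappa>\<^sub>A\<close> is all of \<open>R \<times> R\<close> exactly when the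
\<open>k\<close>-closure of \<open>A\<close> is \<open>R\<close>, and it is the identity exactly when \<open>A\<close> is a zero ideal \<open>{0}\<close>.
Since \<open>\<kappa>\<^sub>A\<close> only depends on the \<open>k\<close>-closure of \<open>A\<close>, which is itself a \<open>k\<close>-ideal,
the two simplicity notions match up trivial \<open>k\<close>-ideals with trivial \<open>k\<close>-congruences.\<close>

lemma is_idealD:
  assumes "is_ideal A"
  shows ideal_nonempty: "\<exists>a. a \<in> A"
    and ideal_add: "a \<in> A \<Longrightarrow> b \<in> A \<Longrightarrow> a + b \<in> A"
    and ideal_mult_left: "a \<in> A \<Longrightarrow> r * a \<in> A"
    and ideal_mult_right: "a \<in> A \<Longrightarrow> a * r \<in> A"
  using assms unfolding is_ideal_def by blast+

lemma kappa_is_congruence: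
  assumes A: "is_ideal A"
  shows "is_congruence (kappa A)"
proof -
  obtain a0 where a0: "a0 \<in> A" using ideal_nonempty[OF A] by blast
  have "refl (kappa A)"
    using a0 by (auto intro!: refl_onI simp: kappa_def)
  moreover have "sym (kappa A)"
    by (auto intro!: symI simp: kappa_def) metis
  moreover have "trans (kappa A)"
  proof (rule transI)
    fix x y z assume "(x, y) \<in> kappa A" "(y, z) \<in> kappa A"
    then obtain a b c d where abcd: "a \<in> A" "b \<in> A" "c \<in> A" "d \<in> A"
      and "x + a = y + b" "y + c = z + d"
      unfolding kappa_def by blast
    then have "x + (a + c) = z + (d + b)"
      by (metis add.assoc add.commute)
    with abcd show "(x, z) \<in> kappa A"
      unfolding kappa_def using ideal_add[OF A] by blast
  qed
  moreover have "(a + c, b + c) \<in> kappa A \<and> (a * c, b * c) \<in> kappa A \<and> (c * a, c * b) \<in> kappa A"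
    if "(a, b) \<in> kappa A" for a b c
  proof -
    from that obtain p q where pq: "p \<in> A" "q \<in> A" and eq: "a + p = b + q"
      unfolding kappa_def by blast
    have "a + c + p = b + c + q"
      using eq by (metis add.assoc add.commute)
    moreover have "a * c + p * c = b * c + q * c" "c * a + c * p = c * b + c * q"
      using eq by (metis distrib_right, metis distrib_left)
    ultimately show ?thesis
      unfolding kappa_def using pq ideal_mult_left[OF A] ideal_mult_right[OF A] by blast
  qed
  ultimately show ?thesis
    unfolding is_congruence_def by (simp add: equiv_def)
qed

lemma kappa_is_k_congruence: "is_ideal A \<Longrightarrow> is_k_congruence (kappa A)"
  unfolding is_k_congruence_def using kappa_is_congruence by blast

lemma subset_k_closure: "is_ideal A \<Longrightarrow> A \<subseteq> k_closure A"
  unfolding k_closure_def using ideal_add by blast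

lemma k_closure_is_ideal:
  assumes A: "is_ideal A"
  shows "is_ideal (k_closure A)"
proof -
  have "x + y \<in> k_closure A" if "x \<in> k_closure A" "y \<in> k_closure A" for x y
  proof -
    from that obtain a b c d where abcd: "a \<in> A" "b \<in> A" "c \<in> A" "d \<in> A"
      and "x + a = b" "y + c = d"
      unfolding k_closure_def by blast
    then have "x + y + (a + c) = b + d"
      by (metis add.assoc add.commute)
    with abcd show ?thesis
      unfolding k_closure_def using ideal_add[OF A] by blast
  qed
  moreover have "r * x \<in> k_closure A \<and> x * r \<in> k_closure A" if "x \<in> k_closure A" for x r
  proof -
    from that obtain a b where ab: "a \<in> A" "b \<in> A" and eq: "x + a = b"
      unfolding k_closure_def by blast
    have "r * x + r * a = r * b" "x * r + a * r = b * r"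
      using eq by (metis distrib_left, metis distrib_right)
    then show ?thesis
      unfolding k_closure_def using ab ideal_mult_left[OF A] ideal_mult_right[OF A] by blast
  qed
  ultimately show ?thesis
    using subset_k_closure[OF A] ideal_nonempty[OF A] unfolding is_ideal_def by blast
qed

lemma k_closure_is_k_ideal:
  assumes A: "is_ideal A"
  shows "is_k_ideal (k_closure A)"
proof -
  have "x \<in> k_closure A" if "x \<in> k_closure (k_closure A)" for x
  proof -
    from that obtain a b where ab: "a \<in> k_closure A" "b \<in> k_closure A" and eq: "x + a = b"
      unfolding k_closure_def by blast
    then obtain a1 a2 b1 b2 where A_elems: "a1 \<in> A" "a2 \<in> A" "b1 \<in> A" "b2 \<in> A"
      and "a + a1 = a2" "b + b1 = b2"
      unfolding k_closure_def by blast
    with eq have "x + (a2 + b1) = b2 + a1"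
      by (metis add.assoc add.commute)
    with A_elems show ?thesis
      unfolding k_closure_def using ideal_add[OF A] by blast
  qed
  then show ?thesis
    using k_closure_is_ideal[OF A] subset_k_closure[OF k_closure_is_ideal[OF A]]
    unfolding is_k_ideal_def by blast
qed

lemma kappa_if_in_k_closure:
  assumes A: "is_ideal A" and "x \<in> k_closure A" "y \<in> k_closure A"
  shows "(x, y) \<in> kappa A"
proof -
  from assms(2,3) obtain a b c d where abcd: "a \<in> A" "b \<in> A" "c \<in> A" "d \<in> A"
    and "x + a = b" "y + c = d"
    unfolding k_closure_def by blast
  then have "x + (a + d) = y + (c + b)"
    by (metis add.assoc add.commute)
  with abcd show ?thesis
    unfolding kappa_def using ideal_add[OF A] by blast
qed

lemma in_k_closure_if_kappa:
  assumes A: "is_ideal A" and "(x, a) \<in> kappa A" "a \<in> A"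
  shows "x \<in> k_closure A"
  using assms unfolding kappa_def k_closure_def by (blast intro: ideal_add[OF A])

lemma kappa_eq_UNIV_iff:
  assumes A: "is_ideal A"
  shows "kappa A = UNIV \<longleftrightarrow> k_closure A = UNIV"
proof
  assume "kappa A = UNIV"
  moreover obtain a0 where "a0 \<in> A" using ideal_nonempty[OF A] by blast
  ultimately show "k_closure A = UNIV"
    using in_k_closure_if_kappa[OF A] by blast
next
  assume "k_closure A = UNIV"
  then show "kappa A = UNIV"
    using kappa_if_in_k_closure[OF A] by auto
qed

lemma kappa_zero_eq_Id:
  assumes "is_zero z"
  shows "kappa {z} = Id"
  using assms unfolding kappa_def is_zero_def by (auto simp: add.commute)

lemma kappa_eq_Id_imp_zero_ideal:
  assumes A: "is_ideal A" and Id: "kappa A = Id"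
  shows "\<exists>z. is_zero z \<and> A = {z}"
proof -
  obtain z where z: "z \<in> A" using ideal_nonempty[OF A] by blast
  have "a = b" if "a \<in> A" "b \<in> A" for a b
  proof -
    have "(a, b) \<in> kappa A"
      unfolding kappa_def using that add.commute by blast
    with Id show ?thesis by auto
  qed
  with z have singleton: "A = {z}" by blast
  have "z + r = r" for r
  proof -
    have "r + (z + z) = (r + z) + z" by (simp add: add.assoc)
    then have "(r, r + z) \<in> kappa A"
      unfolding kappa_def using z ideal_add[OF A z z] by blast
    with Id show ?thesis by (auto simp: add.commute)
  qed
  moreover have "z * r = z" "r * z = z" for r
    using ideal_mult_left[OF A z] ideal_mult_right[OF A z] singleton by auto
  ultimately show ?thesis
    unfolding is_zero_def using singleton by blast
qed

theorem theorem4p4: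
  assumes "\<exists>x y :: 'a::semiring. x \<noteq> y"
  shows "k_simple TYPE('a) \<longleftrightarrow> k_congruence_simple TYPE('a)"
proof
  assume "k_simple TYPE('a)"
  then have trivial: "trivial_ideal (k_closure A)" if "is_ideal A" for A :: "'a set"
    using k_closure_is_k_ideal[OF that] unfolding k_simple_def by blast
  show "k_congruence_simple TYPE('a)"
    unfolding k_congruence_simple_def is_k_congruence_def
  proof (intro allI impI, elim conjE exE)
    fix \<theta> and A :: "'a set" assume A: "is_ideal A" and \<theta>: "\<theta> = kappa A"
    from trivial[OF A] consider "k_closure A = UNIV" | z where "is_zero z" "k_closure A = {z}"
      unfolding trivial_ideal_def by blast
    then show "\<theta> = UNIV \<or> \<theta> = Id"
    proof cases
      case 1
      then show ?thesis using \<theta> kappa_eq_UNIV_iff[OF A] by blast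
    next
      case (2 z)
      then have "A = {z}" using subset_k_closure[OF A] ideal_nonempty[OF A] by auto
      with 2 show ?thesis using \<theta> kappa_zero_eq_Id by blast
    qed
  qed
next
  assume simple: "k_congruence_simple TYPE('a)"
  show "k_simple TYPE('a)"
    unfolding k_simple_def is_k_ideal_def
  proof (intro allI impI, elim conjE)
    fix A :: "'a set" assume A: "is_ideal A" and closed: "A = k_closure A"
    from simple kappa_is_k_congruence[OF A] have "kappa A = UNIV \<or> kappa A = Id"
      unfolding k_congruence_simple_def by blast
    then show "trivial_ideal A"
      using kappa_eq_UNIV_iff[OF A] closed kappa_eq_Id_imp_zero_ideal[OF A]
      unfolding trivial_ideal_def by auto
  qed
qed

end
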